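(* Let $n\in\mathbb N$ and let $\mathbf w_n$ be the word \[ \mathbf w_n=\biggl(\prod_{i=1}^n z_it_i\biggr)\,x\,\biggl(\prod_{i=1}^n z_iy_i^{(n)}\biggr)\,x\,\biggl(\prod_{j=1}^n\biggl(\prod_{i=1}^n y_i^{(n-j)}y_i^{(n+1-j)}\biggr)\biggr). \] Then for each $1\le i\le n$ and $0\le k\le n$ we have $D(\mathbf w_n,x)=n+1$, $D(\mathbf w_n, y_i^{(k)})=k$, $D(\mathbf w_n,t_i)=0$ and $D(\mathbf w_n,z_i)=1$.
   Context: Words are elements of the free monoid over a countably infinite alphabet. In $\mathbf w_n$, the letters $x$, $z_i$, $t_i$ ($1\le i\le n$), and $y_i^{(k)}$ ($1\le i\le n$, $0\le k\le n$) are pairwise distinct, and products $\prod_{i=1}^n$ are taken in increasing order of the index. A letter is simple in a word $\mathbf w$ if it occurs exactly once in $\mathbf w$. For a letter $x$ occurring in $\mathbf w$, ${_{i\mathbf w}}x$ denotes the $i$th occurrence of $x$ in $\mathbf w$. The depth $D(\mathbf w,x)$ of a letter $x$ in $\mathbf w$ is defined inductively: the letters of depth $0$ are exactly the simple letters of $\mathbf w$; a letter $x$ has depth $k\ge1$ if it does not have depth less than $k$ and there is the first occurrence of some letter of depth $k-1$ between ${_{1\mathbf w}}x$ and ${_{2\mathbf w}}x$ in $\mathbf w$; if for no $n\ge0$ is there a first occurrence of a letter of depth $n$ between ${_{1\mathbf w}}x$ and ${_{2\mathbf w}}x$, the depth of $x$ is $\infty$. *)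

theory Defs
  imports Main "HOL-Library.Extended_Nat"
begin

text \<open>Words are lists of letters.  Positions are 0-based list indices.\<close>

definition occ_pos :: "'a list \<Rightarrow> 'a \<Rightarrow> nat list" where
  "occ_pos w x = filter (\<lambda>p. w ! p = x) [0..<length w]"

definition occ :: "'a list \<Rightarrow> nat \<Rightarrow> 'a \<Rightarrow> nat" where
  "occ w i x = occ_pos w x ! (i - 1)"

definition simple :: "'a list \<Rightarrow> 'a \<Rightarrow> bool" where
  "simple w x \<longleftrightarrow> count_list w x = 1"

function has_depth :: "'a list \<Rightarrow> 'a \<Rightarrow> nat \<Rightarrow> bool" where
  "has_depth w x 0 = simple w x"
| "has_depth w x (Suc k) =
     ((\<forall>j. j \<le> k \<longrightarrow> \<not> has_depth w x j) \<and> count_list w x \<ge> 2 \<and>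
      (\<exists>y. has_depth w y k \<and> occ w 1 x < occ w 1 y \<and> occ w 1 y < occ w 2 x))"
  by pat_completeness auto
termination by (relation "measure (\<lambda>(w, x, k). k)") auto

definition D :: "'a list \<Rightarrow> 'a \<Rightarrow> enat" where
  "D w x = (if \<exists>k. has_depth w x k then enat (LEAST k. has_depth w x k) else \<infinity>)"

text \<open>Letters of the word w_n: pairwise distinct by construction.
  Z i = z_i, T i = t_i, Y i k = y_i^(k).\<close>
datatype letter = X | Z nat | T nat | Y nat nat

definition wn :: "nat \<Rightarrow> letter list" where
  "wn n =
     concat (map (\<lambda>i. [Z i, T i]) [1..<n+1]) @ [X] @
     concat (map (\<lambda>i. [Z i, Y i n]) [1..<n+1]) @ [X] @
     concat (map (\<lambda>j. concat (map (\<lambda>i. [Y i (n - j), Y i (n + 1 - j)]) [1..<n+1])) [1..<n+1])"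

end

theory Submission
  imports Defs
begin

(* A function d on the letters of a word w is the depth as soon as it is consistent with the
  recursion at every letter: letters with d x = 0 are simple, and a letter with d x = k + 1
  occurs at least twice and, among the letters whose first occurrence lies between its first
  two occurrences, some has d-value k and none has a smaller one. Strong induction on k then
  gives has_depth w x k <-> d x = k.

  For w_n take d x = n + 1, d y_i^(k) = k, d t_i = 0 and d z_i = 1. The letters t_i and
  y_i^(0) are simple and every other letter occurs exactly twice, so it remains to inspect the
  letters that first occur between the two occurrences: for z_i they include t_i; for x they
  are the y_j^(n), the z_j having occurred before; for y_i^(k) with 0 < k they all have
  upper index k - 1, k or k + 1 and include y_i^(k - 1), because the factor in which
  y_i^(k - 1) first occurs directly follows the one in which y_i^(k) first occurs. *)

lemma occ_pos_append:
  "occ_pos (u @ r) y = occ_pos u y @ map ((+) (length u)) (occ_pos r y)"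
proof -
  have "[0..<length (u @ r)] = [0..<length u] @ [length u..<length u + length r]"
    using upt_add_eq_append[of 0 "length u" "length r"] by simp
  also have "[length u..<length u + length r] = map ((+) (length u)) [0..<length r]"
    by (induction r) simp_all
  finally have upt: "[0..<length (u @ r)] = [0..<length u] @ map ((+) (length u)) [0..<length r]" .
  have "filter (\<lambda>p. (u @ r) ! p = y) [0..<length u] = filter (\<lambda>p. u ! p = y) [0..<length u]"
    by (rule filter_cong) (auto simp: nth_append)
  with upt show ?thesis
    unfolding occ_pos_def by (simp add: filter_map comp_def)
qed

lemma set_occ_pos: "set (occ_pos w y) = {p. p < length w \<and> w ! p = y}"
  by (auto simp: occ_pos_def)

lemma occ_pos_eq_Nil_iff: "occ_pos w y = [] \<longleftrightarrow> y \<notin> set w"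
  by (auto simp: occ_pos_def filter_empty_conv in_set_conv_nth)

lemma occ_pos_notin: "y \<notin> set w \<Longrightarrow> occ_pos w y = []"
  by (simp add: occ_pos_eq_Nil_iff)

lemma occ_pos_Cons_self: "occ_pos (y # r) y = 0 # map Suc (occ_pos r y)"
  using occ_pos_append[of "[y]" r y] by (simp add: occ_pos_def)

lemma occ_less_length: "y \<in> set w \<Longrightarrow> occ w 1 y < length w"
  using nth_mem[of 0 "occ_pos w y"] by (auto simp: occ_def set_occ_pos occ_pos_eq_Nil_iff)

lemma occ_append_left: "y \<in> set u \<Longrightarrow> occ (u @ r) 1 y = occ u 1 y"
  by (simp add: occ_def occ_pos_append nth_append occ_pos_eq_Nil_iff)

lemma occ_append_right:
  assumes "y \<notin> set u" "y \<in> set r"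
  shows "occ (u @ r) 1 y = length u + occ r 1 y"
proof -
  have "occ_pos r y \<noteq> []"
    using assms(2) by (simp add: occ_pos_eq_Nil_iff)
  then show ?thesis
    using assms(1) by (simp add: occ_def occ_pos_append occ_pos_notin nth_map)
qed

lemma occ_twice:
  assumes "x \<notin> set u" "x \<notin> set v"
  shows "occ (u @ x # v @ x # s) 1 x = length u"
    and "occ (u @ x # v @ x # s) 2 x = length u + length v + 1"
  using assms by (simp_all add: occ_def occ_pos_append occ_pos_Cons_self occ_pos_notin)

lemma occ_less_length_iff:
  assumes "y \<in> set (u @ r)"
  shows "occ (u @ r) 1 y < length u \<longleftrightarrow> y \<in> set u"
proof (cases "y \<in> set u")
  case True
  then show ?thesis
    using occ_append_left[of y u r] occ_less_length[of y u] by simp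
next
  case False
  then show ?thesis
    using assms occ_append_right[of y u r] by simp
qed

definition first_occ_between :: "'a list \<Rightarrow> 'a \<Rightarrow> 'a \<Rightarrow> bool" where
  "first_occ_between w x y \<longleftrightarrow> occ w 1 x < occ w 1 y \<and> occ w 1 y < occ w 2 x"

lemma first_occ_between_twice_iff:
  assumes x: "x \<notin> set u" "x \<notin> set v" and y: "y \<in> set (u @ x # v @ x # s)"
  shows "first_occ_between (u @ x # v @ x # s) x y \<longleftrightarrow> y \<in> set v \<and> y \<notin> set u"
proof -
  let ?w = "u @ x # v @ x # s"
  consider "y \<in> set u" | "y = x" | "y \<notin> set u" "y \<noteq> x" by blast
  then show ?thesis
  proof cases
    case 1
    then have "occ ?w 1 y < length u"
      using occ_less_length_iff[of y u "x # v @ x # s"] by simp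
    then show ?thesis
      using 1 occ_twice[OF x, of s] unfolding first_occ_between_def by linarith
  next
    case 2
    then show ?thesis
      using x occ_twice[OF x, of s] unfolding first_occ_between_def by simp
  next
    case 3
    with y have "occ ?w 1 y = length u + 1 + occ (v @ x # s) 1 y"
      using occ_append_right[of y u "x # v @ x # s"] occ_append_right[of y "[x]" "v @ x # s"] by simp
    moreover have "occ (v @ x # s) 1 y < length v \<longleftrightarrow> y \<in> set v"
      using 3 y occ_less_length_iff[of y v "x # s"] by simp
    ultimately show ?thesis
      using 3 occ_twice[OF x, of s] unfolding first_occ_between_def by auto
  qed
qed

definition depth_consistent :: "'a list \<Rightarrow> ('a \<Rightarrow> nat) \<Rightarrow> 'a \<Rightarrow> bool" where
  "depth_consistent w d x \<longleftrightarrow>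
     (d x = 0 \<longrightarrow> simple w x) \<and>
     (\<forall>k. d x = Suc k \<longrightarrow> count_list w x \<ge> 2 \<and>
        (\<exists>y\<in>set w. d y = k \<and> first_occ_between w x y) \<and>
        (\<forall>y\<in>set w. first_occ_between w x y \<longrightarrow> k \<le> d y))"

lemma depth_consistent_eq_Suc_iff:
  assumes consistent: "\<forall>x\<in>set w. depth_consistent w d x"
    and x: "x \<in> set w" "m < d x"
  shows "d x = Suc m \<longleftrightarrow> (\<exists>y\<in>set w. d y = m \<and> first_occ_between w x y)"
proof
  assume "d x = Suc m"
  then show "\<exists>y\<in>set w. d y = m \<and> first_occ_between w x y"
    using consistent x(1) unfolding depth_consistent_def by blast
next
  assume "\<exists>y\<in>set w. d y = m \<and> first_occ_between w x y"
  then obtain y where y: "y \<in> set w" "d y = m" "first_occ_between w x y"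
    by blast
  obtain m' where m': "d x = Suc m'"
    using x(2) by (cases "d x") auto
  then have "\<forall>z\<in>set w. first_occ_between w x z \<longrightarrow> m' \<le> d z"
    using consistent x(1) unfolding depth_consistent_def by blast
  with y have "m' \<le> m"
    by blast
  with m' x(2) show "d x = Suc m"
    by simp
qed

lemma has_depth_iff_consistent:
  assumes consistent: "\<forall>x\<in>set w. depth_consistent w d x"
  shows "has_depth w x k \<longleftrightarrow> x \<in> set w \<and> d x = k"
proof (induction k arbitrary: x rule: less_induct)
  case (less k)
  show ?case
  proof (cases k)
    case 0
    show ?thesis
      using consistent count_notin[of x w] not0_implies_Suc[of "d x"]
      unfolding 0 has_depth.simps simple_def depth_consistent_def by fastforce
  next
    case (Suc m)
    with less.IH have IH: "\<And>j y. j \<le> m \<Longrightarrow> has_depth w y j \<longleftrightarrow> y \<in> set w \<and> d y = j"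
      by simp
    have "has_depth w x k \<longleftrightarrow> (\<forall>j\<le>m. \<not> (x \<in> set w \<and> d x = j)) \<and> 2 \<le> count_list w x \<and>
        (\<exists>y\<in>set w. d y = m \<and> first_occ_between w x y)" (is "_ \<longleftrightarrow> ?recursion")
      unfolding Suc using IH by (auto simp: first_occ_between_def)
    also have "?recursion \<longleftrightarrow> x \<in> set w \<and> d x = Suc m"
    proof
      assume between: ?recursion
      then have x: "x \<in> set w"
        using count_notin[of x w] by fastforce
      with between have "\<not> d x \<le> m"
        by blast
      then have "m < d x"
        by simp
      with between x show "x \<in> set w \<and> d x = Suc m"
        using depth_consistent_eq_Suc_iff[OF consistent x] by blast
    next
      assume "x \<in> set w \<and> d x = Suc m"
      then show ?recursion
        using consistent unfolding depth_consistent_def by auto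
    qed
    finally show ?thesis
      using Suc by simp
  qed
qed

lemma depth_consistent_imp_in_set:
  assumes "depth_consistent w d x"
  shows "x \<in> set w"
proof -
  have "count_list w x \<noteq> 0"
    using assms by (cases "d x") (auto simp: depth_consistent_def simple_def)
  then show ?thesis
    by (simp add: count_list_0_iff)
qed

lemma D_eq_consistent:
  assumes "\<forall>x\<in>set w. depth_consistent w d x" and "x \<in> set w"
  shows "D w x = enat (d x)"
proof -
  have depth: "has_depth w x k \<longleftrightarrow> k = d x" for k
    using has_depth_iff_consistent[OF assms(1)] assms(2) by auto
  then have "(LEAST k. has_depth w x k) = d x"
    by (intro Least_equality) simp_all
  moreover have "\<exists>k. has_depth w x k"
    using depth by blast
  ultimately show ?thesis
    unfolding D_def by (simp only: if_True)
qed

lemma depth_consistent_simple: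
  assumes "x \<notin> set u" "x \<notin> set s" "d x = 0"
  shows "depth_consistent (u @ x # s) d x"
  using assms by (simp add: depth_consistent_def simple_def)

lemma depth_consistent_twice:
  assumes x: "x \<notin> set u" "x \<notin> set v" "x \<notin> set s" "d x = Suc k"
    and y: "y \<in> set v" "y \<notin> set u" "d y = k"
    and new_letters: "\<forall>z\<in>set v - set u. k \<le> d z"
  shows "depth_consistent (u @ x # v @ x # s) d x"
  using x first_occ_between_twice_iff[OF x(1,2)] y new_letters
  unfolding depth_consistent_def by auto

definition blocks :: "(nat \<Rightarrow> 'a list) \<Rightarrow> nat \<Rightarrow> 'a list" where
  "blocks f n = concat (map f [1..<n+1])"

lemma set_blocks [simp]: "set (blocks f n) = (\<Union>i\<in>{1..n}. set (f i))"
  by (simp add: blocks_def atLeastLessThanSuc_atLeastAtMost del: upt_Suc)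

lemma upt_split_at: "i \<in> {1..n} \<Longrightarrow> [1..<n+1] = [1..<i] @ i # [Suc i..<n+1]"
  using upt_add_eq_append[of 1 i "n + 1 - i"] upt_conv_Cons[of i "n + 1"] by simp

lemma blocks_split:
  assumes "i \<in> {1..n}"
  obtains u s where "blocks f n = u @ f i @ s"
    and "set u = (\<Union>j\<in>{1..<i}. set (f j))" and "set s = (\<Union>j\<in>{i<..n}. set (f j))"
proof
  show "blocks f n = concat (map f [1..<i]) @ f i @ concat (map f [Suc i..<n+1])"
    using upt_split_at[OF assms] by (simp add: blocks_def del: upt_Suc)
qed (simp_all add: atLeastLessThanSuc_atLeastAtMost atLeastSucAtMost_greaterThanAtMost del: upt_Suc)

lemma blocks_split_consecutive:
  assumes "i \<in> {1..<n}"
  obtains u s where "blocks f n = u @ f i @ f (Suc i) @ s"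
    and "set u = (\<Union>j\<in>{1..<i}. set (f j))" and "set s = (\<Union>j\<in>{Suc i<..n}. set (f j))"
proof
  have "[Suc i..<n+1] = Suc i # [Suc (Suc i)..<n+1]"
    using assms upt_conv_Cons[of "Suc i" "n + 1"] by simp
  then show "blocks f n = concat (map f [1..<i]) @ f i @ f (Suc i) @ concat (map f [Suc (Suc i)..<n+1])"
    using upt_split_at[of i n] assms by (simp add: blocks_def del: upt_Suc)
qed (simp_all add: atLeastLessThanSuc_atLeastAtMost atLeastSucAtMost_greaterThanAtMost del: upt_Suc)

(* layer n j is the j-th factor of the last product in w_n *)
definition layer :: "nat \<Rightarrow> nat \<Rightarrow> letter list" where
  "layer n j = blocks (\<lambda>i. [Y i (n - j), Y i (n + 1 - j)]) n"

lemma set_layer: "set (layer n j) = (\<Union>i\<in>{1..n}. {Y i (n - j), Y i (n + 1 - j)})"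
  by (simp add: layer_def)

lemma layer_split:
  assumes "i \<in> {1..n}"
  obtains l1 l2 where "layer n j = l1 @ [Y i (n - j), Y i (n + 1 - j)] @ l2"
    and "set l1 = (\<Union>i'\<in>{1..<i}. {Y i' (n - j), Y i' (n + 1 - j)})"
    and "set l2 = (\<Union>i'\<in>{i<..n}. {Y i' (n - j), Y i' (n + 1 - j)})"
proof -
  obtain l1 l2 where "blocks (\<lambda>i. [Y i (n - j), Y i (n + 1 - j)]) n = l1 @ [Y i (n - j), Y i (n + 1 - j)] @ l2"
    and "set l1 = (\<Union>i'\<in>{1..<i}. set [Y i' (n - j), Y i' (n + 1 - j)])"
    and "set l2 = (\<Union>i'\<in>{i<..n}. set [Y i' (n - j), Y i' (n + 1 - j)])"
    by (rule blocks_split[OF assms])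
  then show ?thesis
    by (intro that) (simp_all add: layer_def)
qed

lemma wn_eq_blocks:
  "wn n = blocks (\<lambda>i. [Z i, T i]) n @ X # blocks (\<lambda>i. [Z i, Y i n]) n @ X # blocks (layer n) n"
  by (simp add: wn_def blocks_def layer_def[abs_def] del: upt_Suc)

lemma set_wn_subset: "set (wn n) \<subseteq> insert X (\<Union>i\<in>{1..n}. {Z i, T i} \<union> Y i ` {..n})"
  by (force simp: wn_eq_blocks set_layer)

fun wn_depth :: "nat \<Rightarrow> letter \<Rightarrow> nat" where
  "wn_depth n X = n + 1"
| "wn_depth n (Z i) = 1"
| "wn_depth n (T i) = 0"
| "wn_depth n (Y i k) = k"

lemma depth_consistent_wn_T:
  assumes "i \<in> {1..n}"
  shows "depth_consistent (wn n) (wn_depth n) (T i)"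
proof -
  obtain u s where split: "blocks (\<lambda>i. [Z i, T i]) n = u @ [Z i, T i] @ s"
      and u: "set u = (\<Union>j\<in>{1..<i}. set [Z j, T j])"
      and s: "set s = (\<Union>j\<in>{i<..n}. set [Z j, T j])"
    by (rule blocks_split[OF assms])
  have "wn n = (u @ [Z i]) @ T i # (s @ X # blocks (\<lambda>i. [Z i, Y i n]) n @ X # blocks (layer n) n)"
    by (simp add: wn_eq_blocks split)
  also have "depth_consistent \<dots> (wn_depth n) (T i)"
    by (rule depth_consistent_simple) (use u s in \<open>auto simp: set_layer\<close>)
  finally show ?thesis .
qed

lemma depth_consistent_wn_Z:
  assumes "i \<in> {1..n}"
  shows "depth_consistent (wn n) (wn_depth n) (Z i)"
proof -
  obtain u s where split: "blocks (\<lambda>i. [Z i, T i]) n = u @ [Z i, T i] @ s"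
      and u: "set u = (\<Union>j\<in>{1..<i}. set [Z j, T j])"
      and s: "set s = (\<Union>j\<in>{i<..n}. set [Z j, T j])"
    by (rule blocks_split[OF assms])
  obtain u' s' where split': "blocks (\<lambda>i. [Z i, Y i n]) n = u' @ [Z i, Y i n] @ s'"
      and u': "set u' = (\<Union>j\<in>{1..<i}. set [Z j, Y j n])"
      and s': "set s' = (\<Union>j\<in>{i<..n}. set [Z j, Y j n])"
    by (rule blocks_split[OF assms])
  have "wn n = u @ Z i # (T i # s @ X # u') @ Z i # (Y i n # s' @ X # blocks (layer n) n)"
    by (simp add: wn_eq_blocks split split')
  also have "depth_consistent \<dots> (wn_depth n) (Z i)"
    by (rule depth_consistent_twice[where k = 0 and y = "T i"]) (use u s u' s' in \<open>auto simp: set_layer\<close>)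
  finally show ?thesis .
qed

lemma depth_consistent_wn_X:
  assumes "1 \<le> n"
  shows "depth_consistent (wn n) (wn_depth n) X"
  unfolding wn_eq_blocks
  by (rule depth_consistent_twice[where k = n and y = "Y 1 n"]) (use assms in \<open>auto simp: set_layer\<close>)

lemma depth_consistent_wn_Y0:
  assumes "i \<in> {1..n}"
  shows "depth_consistent (wn n) (wn_depth n) (Y i 0)"
proof -
  have n: "n \<in> {1..n}"
    using assms by simp
  obtain L1 L2 where split: "blocks (layer n) n = L1 @ layer n n @ L2"
      and L1: "set L1 = (\<Union>j\<in>{1..<n}. set (layer n j))"
      and L2: "set L2 = (\<Union>j\<in>{n<..n}. set (layer n j))"
    by (rule blocks_split[OF n])
  obtain l1 l2 where split': "layer n n = l1 @ [Y i (n - n), Y i (n + 1 - n)] @ l2"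
      and l1: "set l1 = (\<Union>i'\<in>{1..<i}. {Y i' (n - n), Y i' (n + 1 - n)})"
      and l2: "set l2 = (\<Union>i'\<in>{i<..n}. {Y i' (n - n), Y i' (n + 1 - n)})"
    by (rule layer_split[OF assms])
  have "wn n = (blocks (\<lambda>i. [Z i, T i]) n @ X # blocks (\<lambda>i. [Z i, Y i n]) n @ X # L1 @ l1) @
      Y i 0 # (Y i 1 # l2 @ L2)"
    by (simp add: wn_eq_blocks split split')
  also have "depth_consistent \<dots> (wn_depth n) (Y i 0)"
    by (rule depth_consistent_simple) (use assms L1 L2 l1 l2 in \<open>auto simp: set_layer\<close>)
  finally show ?thesis .
qed

lemma depth_consistent_wn_Yn:
  assumes "i \<in> {1..n}"
  shows "depth_consistent (wn n) (wn_depth n) (Y i n)"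
proof -
  have one: "1 \<in> {1..n}"
    using assms by simp
  obtain M1 M2 where split_mid: "blocks (\<lambda>i. [Z i, Y i n]) n = M1 @ [Z i, Y i n] @ M2"
      and M1: "set M1 = (\<Union>j\<in>{1..<i}. set [Z j, Y j n])"
      and M2: "set M2 = (\<Union>j\<in>{i<..n}. set [Z j, Y j n])"
    by (rule blocks_split[OF assms])
  obtain L1 L2 where split_layers: "blocks (layer n) n = L1 @ layer n 1 @ L2"
      and L1: "set L1 = (\<Union>j\<in>{1..<1}. set (layer n j))"
      and L2: "set L2 = (\<Union>j\<in>{1<..n}. set (layer n j))"
    by (rule blocks_split[OF one])
  obtain l1 l2 where split_layer: "layer n 1 = l1 @ [Y i (n - 1), Y i (n + 1 - 1)] @ l2"
      and l1: "set l1 = (\<Union>i'\<in>{1..<i}. {Y i' (n - 1), Y i' (n + 1 - 1)})"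
      and l2: "set l2 = (\<Union>i'\<in>{i<..n}. {Y i' (n - 1), Y i' (n + 1 - 1)})"
    by (rule layer_split[OF assms])
  have "wn n = (blocks (\<lambda>i. [Z i, T i]) n @ X # M1 @ [Z i]) @ Y i n #
      (M2 @ X # L1 @ l1 @ [Y i (n - 1)]) @ Y i n # (l2 @ L2)"
    unfolding wn_eq_blocks split_mid split_layers split_layer by simp
  also have "depth_consistent \<dots> (wn_depth n) (Y i n)"
    by (rule depth_consistent_twice[where k = "n - 1" and y = "Y i (n - 1)"])
      (use assms M1 M2 L1 L2 l1 l2 in \<open>auto simp: set_layer\<close>)
  finally show ?thesis .
qed

lemma depth_consistent_wn_Yk:
  assumes "i \<in> {1..n}" and "k \<in> {1..<n}"
  shows "depth_consistent (wn n) (wn_depth n) (Y i k)"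
proof -
  \<comment> \<open>y_i^(k) occurs in the layers j and j + 1 only\<close>
  define j where "j = n - k"
  have j: "j \<in> {1..<n}" "n - j = k" "n + 1 - j = Suc k" "n - Suc j = k - 1" "n + 1 - Suc j = k"
    using assms(2) unfolding j_def by auto
  obtain L1 L2 where split_layers: "blocks (layer n) n = L1 @ layer n j @ layer n (Suc j) @ L2"
      and L1: "set L1 = (\<Union>j'\<in>{1..<j}. set (layer n j'))"
      and L2: "set L2 = (\<Union>j'\<in>{Suc j<..n}. set (layer n j'))"
    by (rule blocks_split_consecutive[OF j(1)])
  obtain l1 l2 where split_j: "layer n j = l1 @ [Y i (n - j), Y i (n + 1 - j)] @ l2"
      and l1: "set l1 = (\<Union>i'\<in>{1..<i}. {Y i' (n - j), Y i' (n + 1 - j)})"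
      and l2: "set l2 = (\<Union>i'\<in>{i<..n}. {Y i' (n - j), Y i' (n + 1 - j)})"
    by (rule layer_split[OF assms(1)])
  obtain l1' l2' where split_Suc_j: "layer n (Suc j) = l1' @ [Y i (n - Suc j), Y i (n + 1 - Suc j)] @ l2'"
      and l1': "set l1' = (\<Union>i'\<in>{1..<i}. {Y i' (n - Suc j), Y i' (n + 1 - Suc j)})"
      and l2': "set l2' = (\<Union>i'\<in>{i<..n}. {Y i' (n - Suc j), Y i' (n + 1 - Suc j)})"
    by (rule layer_split[OF assms(1)])
  have "wn n = (blocks (\<lambda>i. [Z i, T i]) n @ X # blocks (\<lambda>i. [Z i, Y i n]) n @ X # L1 @ l1) @ Y i k #
      (Y i (Suc k) # l2 @ l1' @ [Y i (k - 1)]) @ Y i k # (l2' @ L2)"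
    unfolding wn_eq_blocks split_layers split_j split_Suc_j j by simp
  also have "depth_consistent \<dots> (wn_depth n) (Y i k)"
    by (rule depth_consistent_twice[where k = "k - 1" and y = "Y i (k - 1)"])
      (use assms j L1 L2 l1 l2 l1' l2' in \<open>auto simp: set_layer\<close>)
  finally show ?thesis .
qed

lemma depth_consistent_wn_Y:
  assumes "i \<in> {1..n}" and "k \<le> n"
  shows "depth_consistent (wn n) (wn_depth n) (Y i k)"
proof -
  consider "k = 0" | "k = n" | "k \<in> {1..<n}"
    using assms(2) by fastforce
  then show ?thesis
    using depth_consistent_wn_Y0 depth_consistent_wn_Yn depth_consistent_wn_Yk assms(1) by cases auto
qed

lemma depth_consistent_wn:
  assumes "1 \<le> n" and "x \<in> set (wn n)"
  shows "depth_consistent (wn n) (wn_depth n) x"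
  using set_wn_subset[of n] assms depth_consistent_wn_X depth_consistent_wn_Z depth_consistent_wn_T
    depth_consistent_wn_Y
  by blast

theorem lemma2:
  fixes n :: nat
  assumes "n \<ge> 1"
  shows "D (wn n) X = enat (n + 1) \<and>
         (\<forall>i\<in>{1..n}. \<forall>k\<in>{0..n}. D (wn n) (Y i k) = enat k) \<and>
         (\<forall>i\<in>{1..n}. D (wn n) (T i) = 0) \<and>
         (\<forall>i\<in>{1..n}. D (wn n) (Z i) = 1)"
proof -
  have consistent: "\<forall>x\<in>set (wn n). depth_consistent (wn n) (wn_depth n) x"
    using depth_consistent_wn[OF assms] by blast
  have D_wn: "D (wn n) x = enat (wn_depth n x)" if "depth_consistent (wn n) (wn_depth n) x" for x
    using D_eq_consistent[OF consistent depth_consistent_imp_in_set[OF that]] .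
  show ?thesis
    using D_wn depth_consistent_wn_X[OF assms] depth_consistent_wn_Y depth_consistent_wn_T depth_consistent_wn_Z
    by (simp add: zero_enat_def one_enat_def)
qed

end
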